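(* Let $G$ be a commutative group and $f_1,f_2$ bijections of $G$ such that $G(f_1)$, $G(f_2)$ are not groups. (i) If $f_1,f_2$ are conjugate in $\mathrm{Aut}(G)$ (i.e., $f_2=\psi f_1\psi^{-1}$ for some $\psi\in\mathrm{Aut}(G)$), then $G(f_1)\cong G(f_2)$. (ii) If $f_1(1)=1=f_2(1)$, then $G(f_1)\cong G(f_2)$ if and only if $f_1,f_2$ are conjugate in $\mathrm{Aut}(G)$. (iii) If $f_2\in\mathrm{Aut}(G)$, $t$ is a square in $G$, and $f_1(x)=f_2(x)t$ for every $x\in G$, then $G(f_1)\cong G(f_2)$.
   Context: Construction $G(f)$: for a commutative group $G$ (written multiplicatively) and a bijection $f:G\to G$, let $\overline{G}=\{\overline{x}:x\in G\}$ be a disjoint copy of $G$, and let $G(f)$ be the set $G\cup\overline{G}$ with multiplication $*$ defined for $x,y\in G$ by $x*y=xy$, $x*\overline{y}=\overline{xy}$, $\overline{x}*y=\overline{xy}$, $\overline{x}*\overline{y}=f(xy)$. It is a commutative loop with neutral element $1$. *)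

theory Defs
  imports "HOL-Algebra.Algebra"
begin

text \<open>The loop G(f): carrier is a disjoint union of two copies of carrier G;
  Inl x stands for x and Inr x stands for the barred copy of x.\<close>
definition Gf :: "('a, 'b) monoid_scheme \<Rightarrow> ('a \<Rightarrow> 'a) \<Rightarrow> ('a + 'a) monoid" where
  "Gf G f = \<lparr> carrier = Inl ` carrier G \<union> Inr ` carrier G,
     monoid.mult = (\<lambda>u v. case u of
               Inl x \<Rightarrow> (case v of Inl y \<Rightarrow> Inl (x \<otimes>\<^bsub>G\<^esub> y)
                                | Inr y \<Rightarrow> Inr (x \<otimes>\<^bsub>G\<^esub> y))
             | Inr x \<Rightarrow> (case v of Inl y \<Rightarrow> Inr (x \<otimes>\<^bsub>G\<^esub> y)
                                | Inr y \<Rightarrow> Inl (f (x \<otimes>\<^bsub>G\<^esub> y)))),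
     one = Inl \<one>\<^bsub>G\<^esub> \<rparr>"

definition conj_in_Aut :: "('a, 'b) monoid_scheme \<Rightarrow> ('a \<Rightarrow> 'a) \<Rightarrow> ('a \<Rightarrow> 'a) \<Rightarrow> bool" where
  "conj_in_Aut G f1 f2 \<longleftrightarrow>
     (\<exists>\<psi> \<in> iso G G. \<forall>x \<in> carrier G. f2 x = \<psi> (f1 (inv_into (carrier G) \<psi> x)))"

end

theory Submission
  imports Defs
begin

text \<open>
  An element \<open>a\<close> of a magma is called middle associative if
  \<open>(u a) w = u (a w)\<close> for all \<open>u, w\<close>; this property is preserved and reflected by
  isomorphisms.  In \<open>G(f)\<close> every \<open>Inl x\<close> is middle associative, and if some \<open>Inr y\<close>
  were, then \<open>f\<close> would be a translation \<open>x \<mapsto> x c\<close> and \<open>G(f)\<close> a group.  Hence an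
  isomorphism \<open>\<Phi> : G(f\<^sub>1) \<rightarrow> G(f\<^sub>2)\<close> between non-groups maps the unbarred copy onto
  the unbarred copy, so it has the shape \<open>\<Phi>(x) = \<psi>(x)\<close>, \<open>\<Phi>(x\<bar>) = (\<psi>(x) a)\<bar>\<close>
  with \<open>\<psi> \<in> Aut(G)\<close>.  Conversely every such twisted map is an isomorphism as soon as
  \<open>\<psi> f\<^sub>1 = f\<^sub>2 (\<psi> \<cdot> a\<^sup>2)\<close>.  This yields the characterisation \<open>Gf_iso_iff\<close>: the loops
  are isomorphic iff \<open>\<psi>(f\<^sub>1 z) = f\<^sub>2(\<psi>(z) a\<^sup>2)\<close> for some automorphism \<open>\<psi>\<close> and some
  \<open>a\<close>.  The three parts of the corollary are the special cases \<open>a = 1\<close> (conjugacy),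
  \<open>a\<^sup>2 = 1\<close> forced by \<open>f\<^sub>i(1) = 1\<close>, and \<open>\<psi> = id\<close> with \<open>f\<^sub>2(a) = s\<close>.
\<close>

lemma Gf_carrier: "carrier (Gf G f) = carrier G <+> carrier G"
  by (simp add: Gf_def Plus_def)

lemma Gf_one: "\<one>\<^bsub>Gf G f\<^esub> = Inl \<one>\<^bsub>G\<^esub>"
  by (simp add: Gf_def)

lemma Gf_mult [simp]:
  "Inl x \<otimes>\<^bsub>Gf G f\<^esub> Inl y = Inl (x \<otimes>\<^bsub>G\<^esub> y)"
  "Inl x \<otimes>\<^bsub>Gf G f\<^esub> Inr y = Inr (x \<otimes>\<^bsub>G\<^esub> y)"
  "Inr x \<otimes>\<^bsub>Gf G f\<^esub> Inl y = Inr (x \<otimes>\<^bsub>G\<^esub> y)"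
  "Inr x \<otimes>\<^bsub>Gf G f\<^esub> Inr y = Inl (f (x \<otimes>\<^bsub>G\<^esub> y))"
  by (simp_all add: Gf_def)

lemma Gf_Inl_in [simp]: "Inl x \<in> carrier (Gf G f) \<longleftrightarrow> x \<in> carrier G"
  and Gf_Inr_in [simp]: "Inr x \<in> carrier (Gf G f) \<longleftrightarrow> x \<in> carrier G"
  by (auto simp: Gf_carrier)

lemma Gf_cases:
  assumes "u \<in> carrier (Gf G f)"
  obtains x where "x \<in> carrier G" "u = Inl x" | x where "x \<in> carrier G" "u = Inr x"
  using assms by (auto simp: Gf_carrier)

lemma bij_betw_map_sum:
  assumes f: "bij_betw f A A'" and g: "bij_betw g B B'"
  shows "bij_betw (map_sum f g) (A <+> B) (A' <+> B')"
proof (rule bij_betwI')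
  fix u v assume "u \<in> A <+> B" "v \<in> A <+> B"
  then show "map_sum f g u = map_sum f g v \<longleftrightarrow> u = v"
    using bij_betw_imp_inj_on[OF f] bij_betw_imp_inj_on[OF g]
    by (elim PlusE) (auto dest: inj_onD)
next
  fix u assume "u \<in> A <+> B"
  then show "map_sum f g u \<in> A' <+> B'"
    using bij_betwE[OF f] bij_betwE[OF g] by (elim PlusE) auto
next
  fix v assume "v \<in> A' <+> B'"
  then show "\<exists>u \<in> A <+> B. v = map_sum f g u"
    using bij_betw_imp_surj_on[OF f] bij_betw_imp_surj_on[OF g] by (elim PlusE) force+
qed

section \<open>Middle associative elements\<close>

definition middle_assoc :: "('c, 'd) monoid_scheme \<Rightarrow> 'c \<Rightarrow> bool" where
  "middle_assoc L a \<longleftrightarrow>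
     (\<forall>u \<in> carrier L. \<forall>w \<in> carrier L. (u \<otimes>\<^bsub>L\<^esub> a) \<otimes>\<^bsub>L\<^esub> w = u \<otimes>\<^bsub>L\<^esub> (a \<otimes>\<^bsub>L\<^esub> w))"

lemma iso_middle_assoc_iff:
  assumes \<Phi>: "\<Phi> \<in> iso L M" and a: "a \<in> carrier L"
    and closed: "\<And>x y. x \<in> carrier L \<Longrightarrow> y \<in> carrier L \<Longrightarrow> x \<otimes>\<^bsub>L\<^esub> y \<in> carrier L"
  shows "middle_assoc M (\<Phi> a) \<longleftrightarrow> middle_assoc L a"
proof -
  have hom: "\<Phi> (x \<otimes>\<^bsub>L\<^esub> y) = \<Phi> x \<otimes>\<^bsub>M\<^esub> \<Phi> y" if "x \<in> carrier L" "y \<in> carrier L" for x y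
    using \<Phi> that by (simp add: iso_def hom_mult)
  have inj: "inj_on \<Phi> (carrier L)" and onto: "\<Phi> ` carrier L = carrier M"
    using \<Phi> by (auto simp: iso_def bij_betw_def)
  show ?thesis
  proof
    assume mid: "middle_assoc M (\<Phi> a)"
    show "middle_assoc L a" unfolding middle_assoc_def
    proof (intro ballI)
      fix u w assume u: "u \<in> carrier L" and w: "w \<in> carrier L"
      have "\<Phi> ((u \<otimes>\<^bsub>L\<^esub> a) \<otimes>\<^bsub>L\<^esub> w) = (\<Phi> u \<otimes>\<^bsub>M\<^esub> \<Phi> a) \<otimes>\<^bsub>M\<^esub> \<Phi> w"
        using u w a by (simp add: hom closed)
      also have "\<dots> = \<Phi> u \<otimes>\<^bsub>M\<^esub> (\<Phi> a \<otimes>\<^bsub>M\<^esub> \<Phi> w)"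
        using mid u w onto unfolding middle_assoc_def by blast
      also have "\<dots> = \<Phi> (u \<otimes>\<^bsub>L\<^esub> (a \<otimes>\<^bsub>L\<^esub> w))"
        using u w a by (simp add: hom closed)
      finally show "(u \<otimes>\<^bsub>L\<^esub> a) \<otimes>\<^bsub>L\<^esub> w = u \<otimes>\<^bsub>L\<^esub> (a \<otimes>\<^bsub>L\<^esub> w)"
        using inj u w a closed by (meson inj_onD)
    qed
  next
    assume mid: "middle_assoc L a"
    show "middle_assoc M (\<Phi> a)" unfolding middle_assoc_def
    proof (intro ballI)
      fix u w assume "u \<in> carrier M" "w \<in> carrier M"
      then obtain u' w' where u': "u' \<in> carrier L" "u = \<Phi> u'" and w': "w' \<in> carrier L" "w = \<Phi> w'"
        using onto by blast
      have "(\<Phi> u' \<otimes>\<^bsub>M\<^esub> \<Phi> a) \<otimes>\<^bsub>M\<^esub> \<Phi> w' = \<Phi> ((u' \<otimes>\<^bsub>L\<^esub> a) \<otimes>\<^bsub>L\<^esub> w')"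
        using u' w' a by (simp add: hom closed)
      also have "\<dots> = \<Phi> (u' \<otimes>\<^bsub>L\<^esub> (a \<otimes>\<^bsub>L\<^esub> w'))"
        using mid u' w' unfolding middle_assoc_def by simp
      also have "\<dots> = \<Phi> u' \<otimes>\<^bsub>M\<^esub> (\<Phi> a \<otimes>\<^bsub>M\<^esub> \<Phi> w')"
        using u' w' a by (simp add: hom closed)
      finally show "(u \<otimes>\<^bsub>M\<^esub> \<Phi> a) \<otimes>\<^bsub>M\<^esub> w = u \<otimes>\<^bsub>M\<^esub> (\<Phi> a \<otimes>\<^bsub>M\<^esub> w)"
        using u' w' by simp
    qed
  qed
qed

context comm_group
begin

lemma Gf_closed:
  assumes "f \<in> carrier G \<rightarrow> carrier G" "u \<in> carrier (Gf G f)" "v \<in> carrier (Gf G f)"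
  shows "u \<otimes>\<^bsub>Gf G f\<^esub> v \<in> carrier (Gf G f)"
  using assms by (cases rule: Gf_cases[OF assms(2)]; cases rule: Gf_cases[OF assms(3)]) auto

lemma Gf_group_of_translation:
  assumes c: "c \<in> carrier G" and f: "\<And>x. x \<in> carrier G \<Longrightarrow> f x = x \<otimes> c"
  shows "group (Gf G f)"
proof (rule groupI)
  have fC: "f \<in> carrier G \<rightarrow> carrier G" using f c by auto
  show "x \<otimes>\<^bsub>Gf G f\<^esub> y \<in> carrier (Gf G f)"
    if "x \<in> carrier (Gf G f)" "y \<in> carrier (Gf G f)" for x y
    using Gf_closed[OF fC that] .
  show "\<one>\<^bsub>Gf G f\<^esub> \<in> carrier (Gf G f)" by (simp add: Gf_one)
  show "(x \<otimes>\<^bsub>Gf G f\<^esub> y) \<otimes>\<^bsub>Gf G f\<^esub> z = x \<otimes>\<^bsub>Gf G f\<^esub> (y \<otimes>\<^bsub>Gf G f\<^esub> z)"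
    if "x \<in> carrier (Gf G f)" "y \<in> carrier (Gf G f)" "z \<in> carrier (Gf G f)" for x y z
    using that c
    by (cases rule: Gf_cases[OF that(1)]; cases rule: Gf_cases[OF that(2)];
        cases rule: Gf_cases[OF that(3)]) (simp_all add: f m_ac)
  show "\<one>\<^bsub>Gf G f\<^esub> \<otimes>\<^bsub>Gf G f\<^esub> x = x" if "x \<in> carrier (Gf G f)" for x
    using that by (cases rule: Gf_cases[OF that]) (auto simp: Gf_one)
  show "\<exists>y\<in>carrier (Gf G f). y \<otimes>\<^bsub>Gf G f\<^esub> x = \<one>\<^bsub>Gf G f\<^esub>" if "x \<in> carrier (Gf G f)" for x
  proof (cases rule: Gf_cases[OF that])
    case (1 a)
    then show ?thesis by (intro bexI[of _ "Inl (inv a)"]) (auto simp: Gf_one)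
  next
    case (2 a)
    have "f (inv a \<otimes> inv c \<otimes> a) = \<one>"
      using 2 c by (simp add: f m_assoc m_comm[of "inv c"] m_lcomm[of "inv c"])
    then show ?thesis using 2 c by (intro bexI[of _ "Inr (inv a \<otimes> inv c)"]) (auto simp: Gf_one)
  qed
qed

lemma Gf_middle_assoc_Inl:
  assumes "x \<in> carrier G"
  shows "middle_assoc (Gf G f) (Inl x)"
  unfolding middle_assoc_def
proof (intro ballI)
  fix u w assume u: "u \<in> carrier (Gf G f)" and w: "w \<in> carrier (Gf G f)"
  show "(u \<otimes>\<^bsub>Gf G f\<^esub> Inl x) \<otimes>\<^bsub>Gf G f\<^esub> w = u \<otimes>\<^bsub>Gf G f\<^esub> (Inl x \<otimes>\<^bsub>Gf G f\<^esub> w)"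
    using assms by (cases rule: Gf_cases[OF u]; cases rule: Gf_cases[OF w]) (auto simp: m_assoc)
qed

text \<open>A middle associative barred element \<open>y\<bar>\<close> forces \<open>f(x) = x f(1)\<close>, since
  \<open>f(x y z) = (x (y\<bar>)) z\<bar> = x (y\<bar> z\<bar>) = x f(y z)\<close>; so \<open>G(f)\<close> is then a group.\<close>

lemma Gf_middle_assoc_Inr_imp_group:
  assumes fC: "f \<in> carrier G \<rightarrow> carrier G" and y: "y \<in> carrier G"
    and mid: "middle_assoc (Gf G f) (Inr y)"
  shows "group (Gf G f)"
proof (rule Gf_group_of_translation)
  show "f \<one> \<in> carrier G" using fC by auto
  fix x assume x: "x \<in> carrier G"
  have "Inl (f (x \<otimes> y \<otimes> inv y)) = (Inl x \<otimes>\<^bsub>Gf G f\<^esub> Inr y) \<otimes>\<^bsub>Gf G f\<^esub> Inr (inv y)"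
    by simp
  also have "\<dots> = Inl x \<otimes>\<^bsub>Gf G f\<^esub> (Inr y \<otimes>\<^bsub>Gf G f\<^esub> Inr (inv y))"
    using mid[unfolded middle_assoc_def, rule_format, of "Inl x" "Inr (inv y)"] x y by simp
  also have "\<dots> = Inl (x \<otimes> f \<one>)" using y by simp
  finally have "f (x \<otimes> y \<otimes> inv y) = x \<otimes> f \<one>" by simp
  then show "f x = x \<otimes> f \<one>" using x y by (simp add: m_assoc)
qed

lemma Gf_iso_preserves_Inl:
  assumes f1C: "f1 \<in> carrier G \<rightarrow> carrier G" and f2C: "f2 \<in> carrier G \<rightarrow> carrier G"
    and ng1: "\<not> group (Gf G f1)" and ng2: "\<not> group (Gf G f2)"
    and \<Phi>: "\<Phi> \<in> iso (Gf G f1) (Gf G f2)" and u: "u \<in> carrier (Gf G f1)"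
  shows "\<Phi> u \<in> Inl ` carrier G \<longleftrightarrow> u \<in> Inl ` carrier G"
proof -
  have middle_assoc_iff: "middle_assoc (Gf G f) v \<longleftrightarrow> v \<in> Inl ` carrier G"
    if "f \<in> carrier G \<rightarrow> carrier G" "\<not> group (Gf G f)" "v \<in> carrier (Gf G f)" for f v
    using that Gf_middle_assoc_Inl Gf_middle_assoc_Inr_imp_group
    by (cases rule: Gf_cases[OF that(3)]) auto
  have "\<Phi> u \<in> carrier (Gf G f2)" using \<Phi> u by (auto simp: iso_def intro: hom_in_carrier)
  then have "\<Phi> u \<in> Inl ` carrier G \<longleftrightarrow> middle_assoc (Gf G f2) (\<Phi> u)"
    using middle_assoc_iff[OF f2C ng2] by simp
  also have "\<dots> \<longleftrightarrow> middle_assoc (Gf G f1) u"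
    using iso_middle_assoc_iff[OF \<Phi> u] Gf_closed[OF f1C] by blast
  also have "\<dots> \<longleftrightarrow> u \<in> Inl ` carrier G"
    using middle_assoc_iff[OF f1C ng1 u] .
  finally show ?thesis .
qed

section \<open>Isomorphisms between loops \<open>G(f)\<close>\<close>

lemma Gf_iso_restrict_Inl:
  assumes \<Phi>: "\<Phi> \<in> iso (Gf G f1) (Gf G f2)"
    and Inl_iff: "\<And>u. u \<in> carrier (Gf G f1) \<Longrightarrow> \<Phi> u \<in> Inl ` carrier G \<longleftrightarrow> u \<in> Inl ` carrier G"
  obtains \<psi> where "\<psi> \<in> iso G G" "\<And>x. x \<in> carrier G \<Longrightarrow> \<Phi> (Inl x) = Inl (\<psi> x)"
proof -
  have bij: "bij_betw \<Phi> (carrier (Gf G f1)) (carrier (Gf G f2))"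
    using \<Phi> by (simp add: iso_def)
  define \<psi> where "\<psi> x = projl (\<Phi> (Inl x))" for x
  have \<Phi>_Inl: "\<Phi> (Inl x) = Inl (\<psi> x)" and \<psi>_closed: "\<psi> x \<in> carrier G"
    if "x \<in> carrier G" for x
    using Inl_iff[of "Inl x"] that unfolding \<psi>_def by auto
  have "\<psi> \<in> hom G G"
    using hom_mult[OF iso_imp_homomorphism[OF \<Phi>], of "Inl _" "Inl _"]
    by (intro homI) (auto simp: \<Phi>_Inl \<psi>_closed)
  moreover have "inj_on \<psi> (carrier G)"
  proof (rule inj_onI)
    fix x y assume "x \<in> carrier G" "y \<in> carrier G" "\<psi> x = \<psi> y"
    then have "\<Phi> (Inl x) = \<Phi> (Inl y)" by (simp add: \<Phi>_Inl)
    then show "x = y"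
      using bij_betw_imp_inj_on[OF bij] \<open>x \<in> carrier G\<close> \<open>y \<in> carrier G\<close>
      by (auto dest: inj_onD)
  qed
  moreover have "carrier G \<subseteq> \<psi> ` carrier G"
  proof
    fix y assume y: "y \<in> carrier G"
    then obtain u where u: "u \<in> carrier (Gf G f1)" "\<Phi> u = Inl y"
      using bij_betw_imp_surj_on[OF bij] by (metis Gf_Inl_in imageE)
    then obtain x where x: "x \<in> carrier G" "u = Inl x"
      using Inl_iff[OF u(1)] y by auto
    then have "y = \<psi> x" using u(2) by (simp add: \<Phi>_Inl)
    then show "y \<in> \<psi> ` carrier G" using x by blast
  qed
  ultimately have "\<psi> \<in> iso G G"
    using \<psi>_closed by (auto simp: iso_def bij_betw_def)
  then show ?thesis using that \<Phi>_Inl by blast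
qed

text \<open>Hence such an isomorphism is a twisted automorphism:
  \<open>\<Phi>(x) = \<psi>(x)\<close> and \<open>\<Phi>(x\<bar>) = \<Phi>(x \<cdot> 1\<bar>) = (\<psi>(x) a)\<bar>\<close> where \<open>a\<bar> = \<Phi>(1\<bar>)\<close>.\<close>

lemma Gf_iso_shape:
  assumes \<Phi>: "\<Phi> \<in> iso (Gf G f1) (Gf G f2)"
    and Inl_iff: "\<And>u. u \<in> carrier (Gf G f1) \<Longrightarrow> \<Phi> u \<in> Inl ` carrier G \<longleftrightarrow> u \<in> Inl ` carrier G"
  obtains \<psi> a where "\<psi> \<in> iso G G" "a \<in> carrier G"
    "\<And>x. x \<in> carrier G \<Longrightarrow> \<Phi> (Inl x) = Inl (\<psi> x)"
    "\<And>x. x \<in> carrier G \<Longrightarrow> \<Phi> (Inr x) = Inr (\<psi> x \<otimes> a)"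
proof -
  obtain \<psi> where \<psi>: "\<psi> \<in> iso G G" and \<Phi>_Inl: "\<And>x. x \<in> carrier G \<Longrightarrow> \<Phi> (Inl x) = Inl (\<psi> x)"
    using Gf_iso_restrict_Inl[OF \<Phi> Inl_iff] by blast
  have "\<Phi> (Inr \<one>) \<in> carrier (Gf G f2)" "\<Phi> (Inr \<one>) \<notin> Inl ` carrier G"
    using Inl_iff[of "Inr \<one>"] \<Phi> by (auto simp: iso_def intro: hom_in_carrier)
  then obtain a where a: "a \<in> carrier G" and \<Phi>_Inr_one: "\<Phi> (Inr \<one>) = Inr a"
    by (auto elim: Gf_cases)
  have "\<Phi> (Inr x) = Inr (\<psi> x \<otimes> a)" if "x \<in> carrier G" for x
    using hom_mult[OF iso_imp_homomorphism[OF \<Phi>], of "Inl x" "Inr \<one>"] that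
    by (simp add: \<Phi>_Inl \<Phi>_Inr_one)
  with that \<psi> a \<Phi>_Inl show ?thesis by blast
qed

lemma Gf_twisted_iso:
  assumes \<psi>: "\<psi> \<in> iso G G" and a: "a \<in> carrier G"
    and twist: "\<And>z. z \<in> carrier G \<Longrightarrow> \<psi> (f1 z) = f2 (\<psi> z \<otimes> (a \<otimes> a))"
  shows "map_sum \<psi> (\<lambda>x. \<psi> x \<otimes> a) \<in> iso (Gf G f1) (Gf G f2)"
proof (rule isoI)
  have \<psi>_mult: "\<psi> (x \<otimes> y) = \<psi> x \<otimes> \<psi> y" if "x \<in> carrier G" "y \<in> carrier G" for x y
    using \<psi> that by (simp add: iso_def hom_mult)
  have \<psi>_closed: "\<psi> x \<in> carrier G" if "x \<in> carrier G" for x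
    using \<psi> that by (auto simp: iso_def intro: hom_in_carrier)
  show "map_sum \<psi> (\<lambda>x. \<psi> x \<otimes> a) \<in> hom (Gf G f1) (Gf G f2)"
  proof (rule homI)
    fix u v assume u: "u \<in> carrier (Gf G f1)" and v: "v \<in> carrier (Gf G f1)"
    show "map_sum \<psi> (\<lambda>x. \<psi> x \<otimes> a) u \<in> carrier (Gf G f2)"
      using a \<psi>_closed by (cases rule: Gf_cases[OF u]) auto
    show "map_sum \<psi> (\<lambda>x. \<psi> x \<otimes> a) (u \<otimes>\<^bsub>Gf G f1\<^esub> v) =
        map_sum \<psi> (\<lambda>x. \<psi> x \<otimes> a) u \<otimes>\<^bsub>Gf G f2\<^esub> map_sum \<psi> (\<lambda>x. \<psi> x \<otimes> a) v"
      using a \<psi>_closed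
      by (cases rule: Gf_cases[OF u]; cases rule: Gf_cases[OF v]) (simp_all add: \<psi>_mult twist m_ac)
  qed
  have bij_\<psi>: "bij_betw \<psi> (carrier G) (carrier G)" using \<psi> by (simp add: iso_def)
  have "bij_betw (\<lambda>x. x \<otimes> a) (carrier G) (carrier G)"
    by (rule bij_betwI[where g = "\<lambda>x. x \<otimes> inv a"]) (use a in \<open>auto simp: m_assoc\<close>)
  then have "bij_betw (\<lambda>x. \<psi> x \<otimes> a) (carrier G) (carrier G)"
    using bij_betw_trans[OF bij_\<psi>] by (simp add: comp_def)
  then show "bij_betw (map_sum \<psi> (\<lambda>x. \<psi> x \<otimes> a)) (carrier (Gf G f1)) (carrier (Gf G f2))"
    using bij_betw_map_sum[OF bij_\<psi>] by (simp add: Gf_carrier)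
qed

lemma Gf_iso_iff:
  assumes f1C: "f1 \<in> carrier G \<rightarrow> carrier G" and f2C: "f2 \<in> carrier G \<rightarrow> carrier G"
    and ng1: "\<not> group (Gf G f1)" and ng2: "\<not> group (Gf G f2)"
  shows "Gf G f1 \<cong> Gf G f2 \<longleftrightarrow>
    (\<exists>\<psi> \<in> iso G G. \<exists>a \<in> carrier G. \<forall>z \<in> carrier G. \<psi> (f1 z) = f2 (\<psi> z \<otimes> (a \<otimes> a)))"
proof
  assume "Gf G f1 \<cong> Gf G f2"
  then obtain \<Phi> where \<Phi>: "\<Phi> \<in> iso (Gf G f1) (Gf G f2)" by (auto simp: is_iso_def)
  obtain \<psi> a where \<psi>: "\<psi> \<in> iso G G" and a: "a \<in> carrier G"
    and \<Phi>_Inl: "\<And>x. x \<in> carrier G \<Longrightarrow> \<Phi> (Inl x) = Inl (\<psi> x)"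
    and \<Phi>_Inr: "\<And>x. x \<in> carrier G \<Longrightarrow> \<Phi> (Inr x) = Inr (\<psi> x \<otimes> a)"
    using Gf_iso_shape[OF \<Phi> Gf_iso_preserves_Inl[OF f1C f2C ng1 ng2 \<Phi>]] by blast
  have \<psi>_one: "\<psi> \<one> = \<one>"
    using hom_one[OF iso_imp_homomorphism[OF \<psi>] is_group is_group] .
  have "\<psi> (f1 z) = f2 (\<psi> z \<otimes> (a \<otimes> a))" if z: "z \<in> carrier G" for z
  proof -
    have "Inl (\<psi> (f1 z)) = \<Phi> (Inr z \<otimes>\<^bsub>Gf G f1\<^esub> Inr \<one>)"
      using z \<Phi>_Inl[OF funcset_mem[OF f1C z]] by simp
    also have "\<dots> = \<Phi> (Inr z) \<otimes>\<^bsub>Gf G f2\<^esub> \<Phi> (Inr \<one>)"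
      by (rule hom_mult[OF iso_imp_homomorphism[OF \<Phi>]]) (use z in simp_all)
    also have "\<dots> = Inl (f2 (\<psi> z \<otimes> (a \<otimes> a)))"
      using z a hom_in_carrier[OF iso_imp_homomorphism[OF \<psi>] z]
      by (simp add: \<Phi>_Inr \<psi>_one m_assoc)
    finally show ?thesis by simp
  qed
  then show "\<exists>\<psi> \<in> iso G G. \<exists>a \<in> carrier G. \<forall>z \<in> carrier G. \<psi> (f1 z) = f2 (\<psi> z \<otimes> (a \<otimes> a))"
    using \<psi> a by blast
next
  assume "\<exists>\<psi> \<in> iso G G. \<exists>a \<in> carrier G. \<forall>z \<in> carrier G. \<psi> (f1 z) = f2 (\<psi> z \<otimes> (a \<otimes> a))"
  then show "Gf G f1 \<cong> Gf G f2"
    using Gf_twisted_iso by (blast intro: is_isoI)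
qed

end

lemma conj_in_Aut_iff:
  "conj_in_Aut G f1 f2 \<longleftrightarrow> (\<exists>\<psi> \<in> iso G G. \<forall>z \<in> carrier G. \<psi> (f1 z) = f2 (\<psi> z))"
proof -
  have "(\<forall>x \<in> carrier G. f2 x = \<psi> (f1 (inv_into (carrier G) \<psi> x)))
      \<longleftrightarrow> (\<forall>z \<in> carrier G. \<psi> (f1 z) = f2 (\<psi> z))" if "\<psi> \<in> iso G G" for \<psi>
  proof -
    have bij: "bij_betw \<psi> (carrier G) (carrier G)" using that by (simp add: iso_def)
    show ?thesis
      using bij_betw_inv_into_left[OF bij] bij_betw_inv_into_right[OF bij]
        bij_betwE[OF bij] bij_betwE[OF bij_betw_inv_into[OF bij]]
      by metis
  qed
  then show ?thesis unfolding conj_in_Aut_def by blast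
qed

context comm_group
begin

lemma Gf_iso_of_conj:
  assumes "conj_in_Aut G f1 f2"
  shows "Gf G f1 \<cong> Gf G f2"
proof -
  obtain \<psi> where \<psi>: "\<psi> \<in> iso G G" and comm: "\<And>z. z \<in> carrier G \<Longrightarrow> \<psi> (f1 z) = f2 (\<psi> z)"
    using assms by (auto simp: conj_in_Aut_iff)
  have "\<psi> (f1 z) = f2 (\<psi> z \<otimes> (\<one> \<otimes> \<one>))" if "z \<in> carrier G" for z
    using comm that hom_in_carrier[OF iso_imp_homomorphism[OF \<psi>] that] by simp
  then show ?thesis by (rule is_isoI[OF Gf_twisted_iso[OF \<psi> one_closed]])
qed

text \<open>Part (ii), converse direction: when \<open>f\<^sub>1\<close>, \<open>f\<^sub>2\<close> fix \<open>1\<close>, the twist \<open>a\<close> of any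
  isomorphism satisfies \<open>f\<^sub>2(a\<^sup>2) = \<psi>(f\<^sub>1(1)) = 1 = f\<^sub>2(1)\<close>, hence \<open>a\<^sup>2 = 1\<close>.\<close>

lemma Gf_iso_imp_conj:
  assumes f1C: "f1 \<in> carrier G \<rightarrow> carrier G" and f2C: "f2 \<in> carrier G \<rightarrow> carrier G"
    and ng1: "\<not> group (Gf G f1)" and ng2: "\<not> group (Gf G f2)"
    and f2_inj: "inj_on f2 (carrier G)" and f1_one: "f1 \<one> = \<one>" and f2_one: "f2 \<one> = \<one>"
    and "Gf G f1 \<cong> Gf G f2"
  shows "conj_in_Aut G f1 f2"
proof -
  obtain \<psi> a where \<psi>: "\<psi> \<in> iso G G" and a: "a \<in> carrier G"
    and twist: "\<And>z. z \<in> carrier G \<Longrightarrow> \<psi> (f1 z) = f2 (\<psi> z \<otimes> (a \<otimes> a))"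
    using assms Gf_iso_iff[OF f1C f2C ng1 ng2] by blast
  have \<psi>_one: "\<psi> \<one> = \<one>"
    using hom_one[OF iso_imp_homomorphism[OF \<psi>] is_group is_group] .
  have "f2 (a \<otimes> a) = \<one>"
    using twist[of \<one>] a by (simp add: f1_one \<psi>_one)
  then have "f2 (a \<otimes> a) = f2 \<one>" by (simp add: f2_one)
  then have a_square: "a \<otimes> a = \<one>"
    using f2_inj a by (auto dest: inj_onD)
  have "\<psi> (f1 z) = f2 (\<psi> z)" if "z \<in> carrier G" for z
    using twist[OF that] hom_in_carrier[OF iso_imp_homomorphism[OF \<psi>] that]
    by (simp add: a_square)
  then show ?thesis using \<psi> by (auto simp: conj_in_Aut_iff)
qed

text \<open>Part (iii): translating an automorphism \<open>f\<^sub>2\<close> by a square \<open>s\<^sup>2\<close> does not change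
  the loop; take \<open>\<psi> = id\<close> and \<open>a = f\<^sub>2\<^sup>-\<^sup>1(s)\<close>.\<close>

lemma Gf_iso_of_square_translate:
  assumes f2: "f2 \<in> iso G G" and s: "s \<in> carrier G"
    and f1: "\<And>x. x \<in> carrier G \<Longrightarrow> f1 x = f2 x \<otimes> (s \<otimes> s)"
  shows "Gf G f1 \<cong> Gf G f2"
proof -
  have "s \<in> f2 ` carrier G" using f2 s by (simp add: iso_def bij_betw_def)
  then obtain a where a: "a \<in> carrier G" and f2_a: "f2 a = s" by blast
  have "f1 z = f2 (z \<otimes> (a \<otimes> a))" if "z \<in> carrier G" for z
    using that a f1 iso_imp_homomorphism[OF f2] by (simp add: hom_mult f2_a)
  then show ?thesis by (intro is_isoI[OF Gf_twisted_iso[OF iso_set_refl a]])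
qed

end

theorem corollary2p6:
  fixes G :: "('a, 'b) monoid_scheme" and f1 f2 :: "'a \<Rightarrow> 'a"
  assumes "comm_group G"
    and "bij_betw f1 (carrier G) (carrier G)"
    and "bij_betw f2 (carrier G) (carrier G)"
    and "\<not> group (Gf G f1)"
    and "\<not> group (Gf G f2)"
  shows "(conj_in_Aut G f1 f2 \<longrightarrow> Gf G f1 \<cong> Gf G f2)
    \<and> (f1 \<one>\<^bsub>G\<^esub> = \<one>\<^bsub>G\<^esub> \<and> f2 \<one>\<^bsub>G\<^esub> = \<one>\<^bsub>G\<^esub> \<longrightarrow>
         (Gf G f1 \<cong> Gf G f2 \<longleftrightarrow> conj_in_Aut G f1 f2))
    \<and> (\<forall>t \<in> carrier G. f2 \<in> iso G G \<and> (\<exists>s \<in> carrier G. t = s \<otimes>\<^bsub>G\<^esub> s)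
         \<and> (\<forall>x \<in> carrier G. f1 x = f2 x \<otimes>\<^bsub>G\<^esub> t) \<longrightarrow> Gf G f1 \<cong> Gf G f2)"
proof -
  interpret comm_group G by fact
  have f1C: "f1 \<in> carrier G \<rightarrow> carrier G" and f2C: "f2 \<in> carrier G \<rightarrow> carrier G"
    using assms(2,3) by (simp_all add: bij_betw_imp_funcset)
  have part_i: "conj_in_Aut G f1 f2 \<longrightarrow> Gf G f1 \<cong> Gf G f2"
    using Gf_iso_of_conj by blast
  have part_ii: "f1 \<one>\<^bsub>G\<^esub> = \<one>\<^bsub>G\<^esub> \<and> f2 \<one>\<^bsub>G\<^esub> = \<one>\<^bsub>G\<^esub> \<longrightarrow>
      (Gf G f1 \<cong> Gf G f2 \<longleftrightarrow> conj_in_Aut G f1 f2)"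
    using Gf_iso_of_conj Gf_iso_imp_conj[OF f1C f2C assms(4,5) bij_betw_imp_inj_on[OF assms(3)]]
    by blast
  have part_iii: "\<forall>t \<in> carrier G. f2 \<in> iso G G \<and> (\<exists>s \<in> carrier G. t = s \<otimes>\<^bsub>G\<^esub> s)
      \<and> (\<forall>x \<in> carrier G. f1 x = f2 x \<otimes>\<^bsub>G\<^esub> t) \<longrightarrow> Gf G f1 \<cong> Gf G f2"
  proof (intro ballI impI)
    fix t assume t: "f2 \<in> iso G G \<and> (\<exists>s \<in> carrier G. t = s \<otimes>\<^bsub>G\<^esub> s)
      \<and> (\<forall>x \<in> carrier G. f1 x = f2 x \<otimes>\<^bsub>G\<^esub> t)"
    then obtain s where "s \<in> carrier G" "t = s \<otimes>\<^bsub>G\<^esub> s" by blast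
    then show "Gf G f1 \<cong> Gf G f2"
      using t Gf_iso_of_square_translate[of f2 s f1] by blast
  qed
  show ?thesis by (intro conjI part_i part_ii part_iii)
qed

end
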